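(* Let $K\ge 1$, $c>0$, $P_{\max}>0$, and for $k,k'\in\{1,\dots,K\}$ let $a_{k,k'}\ge 0$, $d_k\ge 0$, $n_k>0$ with $a_{k,k}\ge d_k$, and $\gamma_k\ge 0$. Define on $[0,\infty)^K$ $$f_k(\mathbf{P})=\log_2\Big(\sum_{k'}a_{k,k'}P_{k'}+n_k\Big),\quad g_k(\mathbf{P})=\log_2\Big(\sum_{k'}a_{k,k'}P_{k'}-d_kP_k+n_k\Big),\quad R_k=c\,(f_k-g_k),$$ the first-order Taylor expansions at $\mathbf{P}_0$ $$\hat f_k(\mathbf{P},\mathbf{P}_0)=f_k(\mathbf{P}_0)+\frac{\sum_{k'}a_{k,k'}(P_{k'}-P_{0,k'})}{\ln 2\,(\sum_{k'}a_{k,k'}P_{0,k'}+n_k)},\quad \hat g_k(\mathbf{P},\mathbf{P}_0)=g_k(\mathbf{P}_0)+\frac{\sum_{k'}a_{k,k'}(P_{k'}-P_{0,k'})-d_k(P_k-P_{0,k})}{\ln 2\,(\sum_{k'}a_{k,k'}P_{0,k'}-d_kP_{0,k}+n_k)},$$ $\hat R_k(\mathbf{P},\mathbf{P}_0)=c(\hat f_k(\mathbf{P},\mathbf{P}_0)-g_k(\mathbf{P}))$, $\overline R_k(\mathbf{P},\mathbf{P}_0)=c(f_k(\mathbf{P})-\hat g_k(\mathbf{P},\mathbf{P}_0))$, $P_{\mathrm N}(\mathbf{P},x)=C_0+\sum_k\Delta_kP_k+\sum_k\beta_kx_k$ with $C_0>0$, $\Delta_k\ge1$, $\beta_k>0$,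 $$\mathrm{EE}(\mathbf{P})=\frac{\sum_kR_k(\mathbf{P})}{P_{\mathrm N}(\mathbf{P},(R_k(\mathbf{P}))_k)},\qquad \overline{\mathrm{EE}}(\mathbf{P},\mathbf{P}_0)=\frac{\sum_k\overline R_k(\mathbf{P},\mathbf{P}_0)}{P_{\mathrm N}(\mathbf{P},(\hat R_k(\mathbf{P},\mathbf{P}_0))_k)}.$$ Let $\mathcal F=\{\mathbf P: 0\le P_k\le P_{\max},\ \gamma_k(\sum_{k'}a_{k,k'}P_{k'}+n_k)-(1+\gamma_k)d_kP_k\le 0\ \ \forall k\}$, assumed nonempty. The Successive Lower-Bound Maximization (SLM) algorithm starts from some $\mathbf P^{(0)}\in\mathcal F$ and iterates $\mathbf P^{(n)}\in\arg\max_{\mathbf P\in\mathcal F}\overline{\mathrm{EE}}(\mathbf P,\mathbf P^{(n-1)})$. Then every limit point of the iterates $(\mathbf P^{(n)})$ generated by the SLM algorithm is a stationary point of the problem $\max_{\mathbf P\in\mathcal F}\mathrm{EE}(\mathbf P)$, and the SLM algorithm is globally convergent.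
   Context: Model: uplink network with $K$ users, $P_k$ the transmit power of user $k$; $c=\tau_uB/(\tau_u+\tau_p)$, $a_{k,k'}=\mathbb{E}\{|\mathrm{IS}_{k,k'}|^2\}$, $d_k=|\mathbb{E}\{\mathrm{DS}_k\}|^2$, $n_k$ effective noise power; $R_k$ is the rate of user $k$; $P_{\mathrm N}$ is the total network power (affine in the rates with positive coefficients); the constraint defining $\mathcal F$ is the QoS constraint $R_k\ge R_{k,\min}$ rewritten linearly with $\gamma_k=2^{\tau_cR_{k,\min}/(\tau_uB)}-1$. A stationary point of $\max_{\mathbf P\in\mathcal F}\mathrm{EE}(\mathbf P)$ is a point $\mathbf P^*\in\mathcal F$ with $\nabla\mathrm{EE}(\mathbf P^* )^{\top}(\mathbf P-\mathbf P^* )\le 0$ for all $\mathbf P\in\mathcal F$. "Globally convergent" means the stated limit-point property holds for any feasible initial point. *)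

theory Defs
  imports "HOL-Analysis.Analysis"
begin

text \<open>Power vectors live in real^'k, where the finite type 'k indexes the K users
  (K = CARD('k) \<ge> 1 automatically).  a k k' is a_{k,k'}.\<close>

definition ffun :: "('k::finite \<Rightarrow> 'k \<Rightarrow> real) \<Rightarrow> ('k \<Rightarrow> real) \<Rightarrow> real^'k \<Rightarrow> 'k \<Rightarrow> real" where
  "ffun a n P k = log 2 ((\<Sum>k'\<in>UNIV. a k k' * P$k') + n k)"

definition gfun :: "('k::finite \<Rightarrow> 'k \<Rightarrow> real) \<Rightarrow> ('k \<Rightarrow> real) \<Rightarrow> ('k \<Rightarrow> real) \<Rightarrow> real^'k \<Rightarrow> 'k \<Rightarrow> real" where
  "gfun a d n P k = log 2 ((\<Sum>k'\<in>UNIV. a k k' * P$k') - d k * P$k + n k)"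

definition Rate :: "real \<Rightarrow> ('k::finite \<Rightarrow> 'k \<Rightarrow> real) \<Rightarrow> ('k \<Rightarrow> real) \<Rightarrow> ('k \<Rightarrow> real) \<Rightarrow> real^'k \<Rightarrow> 'k \<Rightarrow> real" where
  "Rate c a d n P k = c * (ffun a n P k - gfun a d n P k)"

definition fhat :: "('k::finite \<Rightarrow> 'k \<Rightarrow> real) \<Rightarrow> ('k \<Rightarrow> real) \<Rightarrow> real^'k \<Rightarrow> real^'k \<Rightarrow> 'k \<Rightarrow> real" where
  "fhat a n P P0 k = ffun a n P0 k +
     (\<Sum>k'\<in>UNIV. a k k' * (P$k' - P0$k')) / (ln 2 * ((\<Sum>k'\<in>UNIV. a k k' * P0$k') + n k))"

definition ghat :: "('k::finite \<Rightarrow> 'k \<Rightarrow> real) \<Rightarrow> ('k \<Rightarrow> real) \<Rightarrow> ('k \<Rightarrow> real) \<Rightarrow> real^'k \<Rightarrow> real^'k \<Rightarrow> 'k \<Rightarrow> real" where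
  "ghat a d n P P0 k = gfun a d n P0 k +
     ((\<Sum>k'\<in>UNIV. a k k' * (P$k' - P0$k')) - d k * (P$k - P0$k)) /
       (ln 2 * ((\<Sum>k'\<in>UNIV. a k k' * P0$k') - d k * P0$k + n k))"

definition Rhat :: "real \<Rightarrow> ('k::finite \<Rightarrow> 'k \<Rightarrow> real) \<Rightarrow> ('k \<Rightarrow> real) \<Rightarrow> ('k \<Rightarrow> real) \<Rightarrow> real^'k \<Rightarrow> real^'k \<Rightarrow> 'k \<Rightarrow> real" where
  "Rhat c a d n P P0 k = c * (fhat a n P P0 k - gfun a d n P k)"

definition Rbar :: "real \<Rightarrow> ('k::finite \<Rightarrow> 'k \<Rightarrow> real) \<Rightarrow> ('k \<Rightarrow> real) \<Rightarrow> ('k \<Rightarrow> real) \<Rightarrow> real^'k \<Rightarrow> real^'k \<Rightarrow> 'k \<Rightarrow> real" where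
  "Rbar c a d n P P0 k = c * (ffun a n P k - ghat a d n P P0 k)"

definition PN :: "real \<Rightarrow> ('k::finite \<Rightarrow> real) \<Rightarrow> ('k \<Rightarrow> real) \<Rightarrow> real^'k \<Rightarrow> ('k \<Rightarrow> real) \<Rightarrow> real" where
  "PN C0 \<Delta> \<beta> P x = C0 + (\<Sum>k\<in>UNIV. \<Delta> k * P$k) + (\<Sum>k\<in>UNIV. \<beta> k * x k)"

definition EE :: "real \<Rightarrow> ('k::finite \<Rightarrow> 'k \<Rightarrow> real) \<Rightarrow> ('k \<Rightarrow> real) \<Rightarrow> ('k \<Rightarrow> real)
    \<Rightarrow> real \<Rightarrow> ('k \<Rightarrow> real) \<Rightarrow> ('k \<Rightarrow> real) \<Rightarrow> real^'k \<Rightarrow> real" where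
  "EE c a d n C0 \<Delta> \<beta> P =
     (\<Sum>k\<in>UNIV. Rate c a d n P k) / PN C0 \<Delta> \<beta> P (\<lambda>k. Rate c a d n P k)"

definition EEbar :: "real \<Rightarrow> ('k::finite \<Rightarrow> 'k \<Rightarrow> real) \<Rightarrow> ('k \<Rightarrow> real) \<Rightarrow> ('k \<Rightarrow> real)
    \<Rightarrow> real \<Rightarrow> ('k \<Rightarrow> real) \<Rightarrow> ('k \<Rightarrow> real) \<Rightarrow> real^'k \<Rightarrow> real^'k \<Rightarrow> real" where
  "EEbar c a d n C0 \<Delta> \<beta> P P0 =
     (\<Sum>k\<in>UNIV. Rbar c a d n P P0 k) / PN C0 \<Delta> \<beta> P (\<lambda>k. Rhat c a d n P P0 k)"

definition Feas :: "real \<Rightarrow> ('k::finite \<Rightarrow> 'k \<Rightarrow> real) \<Rightarrow> ('k \<Rightarrow> real) \<Rightarrow> ('k \<Rightarrow> real) \<Rightarrow> ('k \<Rightarrow> real) \<Rightarrow> (real^'k) set" where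
  "Feas Pmax a d n \<gamma> = {P. \<forall>k. 0 \<le> P$k \<and> P$k \<le> Pmax \<and>
      \<gamma> k * ((\<Sum>k'\<in>UNIV. a k k' * P$k') + n k) - (1 + \<gamma> k) * d k * P$k \<le> 0}"

definition stationary_point :: "(real^'k::finite \<Rightarrow> real) \<Rightarrow> (real^'k) set \<Rightarrow> real^'k \<Rightarrow> bool" where
  "stationary_point h S Ps \<longleftrightarrow> Ps \<in> S \<and>
     (\<exists>D. (h has_derivative D) (at Ps) \<and> (\<forall>P\<in>S. D (P - Ps) \<le> 0))"

definition limit_point :: "(nat \<Rightarrow> 'a::topological_space) \<Rightarrow> 'a \<Rightarrow> bool" where
  "limit_point X x \<longleftrightarrow> (\<exists>r. strict_mono r \<and> (X \<circ> r) \<longlonglongrightarrow> x)"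

end

theory Submission
  imports Defs
begin

text \<open>By concavity of \<open>log\<close>, replacing \<open>g\<^sub>k\<close> by its tangent at \<open>P\<^sub>0\<close> decreases the numerator
  of EE and replacing \<open>f\<^sub>k\<close> by its tangent increases the denominator, so
  \<open>EEbar(\<cdot>, P\<^sub>0)\<close> is a lower bound of EE on the feasible set that touches it at \<open>P\<^sub>0\<close> and
  has the same derivative there. Hence the SLM iterates increase EE, and passing to the limit
  in the maximality of each iterate shows that a limit point \<open>P\<^sup>*\<close> maximises
  \<open>EEbar(\<cdot>, P\<^sup>*)\<close> over the closed convex set F. The first-order optimality condition of this
  maximisation is the stationarity condition for EE.\<close>

definition log_tangent :: "real \<Rightarrow> real \<Rightarrow> real \<Rightarrow> real" where
  "log_tangent b x y = log b x + (y - x) / (ln b * x)"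

lemma log_tangent_self [simp]: "log_tangent b x x = log b x"
  by (simp add: log_tangent_def)

lemma log_le_log_tangent:
  assumes "1 < b" "0 < x" "0 < y"
  shows "log b y \<le> log_tangent b x y"
proof -
  have "ln y - ln x \<le> (y - x) / x"
    using ln_le_minus_one[of "y / x"] assms by (simp add: ln_div diff_divide_distrib)
  then have "(ln y - ln x) / ln b \<le> ((y - x) / x) / ln b"
    using assms by (intro divide_right_mono) auto
  moreover have "log b y - log b x = (ln y - ln x) / ln b"
    by (simp add: log_def diff_divide_distrib)
  moreover have "(y - x) / (ln b * x) = ((y - x) / x) / ln b"
    by (simp add: mult.commute)
  ultimately show ?thesis
    unfolding log_tangent_def by linarith
qed

lemma has_derivative_log_comp:
  fixes L :: "'a::real_normed_vector \<Rightarrow> real"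
  assumes "(L has_derivative L') (at x)" "0 < L x"
  shows "((\<lambda>y. log b (L y)) has_derivative (\<lambda>h. L' h / (ln b * L x))) (at x)"
proof -
  have "((\<lambda>y. inverse (ln b) * ln (L y)) has_derivative (\<lambda>h. inverse (ln b) * (inverse (L x) * L' h))) (at x)"
    using assms by (auto intro!: derivative_eq_intros)
  then show ?thesis
    by (simp add: log_def field_simps)
qed

lemma has_derivative_log_tangent_comp:
  fixes L :: "'a::real_normed_vector \<Rightarrow> real"
  assumes "(L has_derivative L') (at x)"
  shows "((\<lambda>y. log_tangent b (L x) (L y)) has_derivative (\<lambda>h. L' h / (ln b * L x))) (at x)"
proof -
  have "((\<lambda>y. log b (L x) + inverse (ln b * L x) * (L y - L x)) has_derivative
      (\<lambda>h. inverse (ln b * L x) * L' h)) (at x)"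
    using assms by (auto intro!: derivative_eq_intros)
  then show ?thesis
    by (simp add: log_tangent_def field_simps)
qed

lemma has_derivative_max_on_convex:
  fixes \<phi> :: "'a::real_normed_vector \<Rightarrow> real"
  assumes "convex S" "x \<in> S" "y \<in> S"
    and deriv: "(\<phi> has_derivative D) (at x)"
    and max: "\<And>z. z \<in> S \<Longrightarrow> \<phi> z \<le> \<phi> x"
  shows "D (y - x) \<le> 0"
proof (rule ccontr)
  assume "\<not> D (y - x) \<le> 0"
  have "((\<lambda>t. x + t *\<^sub>R (y - x)) has_derivative (\<lambda>t. t *\<^sub>R (y - x))) (at 0)"
    by (auto intro!: derivative_eq_intros)
  from has_derivative_compose[OF this] deriv
  have "((\<lambda>t. \<phi> (x + t *\<^sub>R (y - x))) has_derivative (\<lambda>t. D (t *\<^sub>R (y - x)))) (at 0)"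
    by simp
  moreover have "(\<lambda>t. D (t *\<^sub>R (y - x))) = (*) (D (y - x))"
    using linear_scale[OF has_derivative_linear[OF deriv]] by auto
  ultimately have "DERIV (\<lambda>t. \<phi> (x + t *\<^sub>R (y - x))) 0 :> D (y - x)"
    by (simp add: has_field_derivative_def)
  from DERIV_pos_inc_right[OF this] \<open>\<not> D (y - x) \<le> 0\<close>
  obtain e where "e > 0" and inc: "\<And>t. 0 < t \<Longrightarrow> t < e \<Longrightarrow> \<phi> x < \<phi> (x + t *\<^sub>R (y - x))"
    by auto
  define t where "t = min (e / 2) 1"
  have "x + t *\<^sub>R (y - x) = (1 - t) *\<^sub>R x + t *\<^sub>R y"
    by (simp add: algebra_simps)
  also have "\<dots> \<in> S"
    using \<open>e > 0\<close> by (intro convexD_alt assms) (auto simp: t_def)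
  finally show False
    using inc[of t] max \<open>e > 0\<close> by (fastforce simp: t_def)
qed

lemma stationary_point_if_surrogate_maximized:
  assumes "convex S" "x \<in> S"
    and "(f has_derivative D) (at x)" "(u has_derivative D) (at x)"
    and "\<And>y. y \<in> S \<Longrightarrow> u y \<le> u x"
  shows "stationary_point f S x"
  unfolding stationary_point_def
  using assms has_derivative_max_on_convex[OF assms(1,2) _ assms(4,5)] by blast

lemma minorize_maximize_limit_point:
  fixes f :: "'a::t2_space \<Rightarrow> real" and u :: "'a \<Rightarrow> 'a \<Rightarrow> real"
  assumes "closed S"
    and minorant: "\<And>x y. x \<in> S \<Longrightarrow> y \<in> S \<Longrightarrow> u x y \<le> f x"
    and touching: "\<And>y. y \<in> S \<Longrightarrow> u y y = f y"
    and f_cont: "\<And>y. y \<in> S \<Longrightarrow> isCont f y"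
    and u_cont: "\<And>x y. x \<in> S \<Longrightarrow> y \<in> S \<Longrightarrow> isCont (u x) y"
    and init: "X 0 \<in> S"
    and step: "\<And>m. X (Suc m) \<in> S \<and> (\<forall>x\<in>S. u x (X m) \<le> u (X (Suc m)) (X m))"
    and "limit_point X z"
  shows "z \<in> S \<and> (\<forall>x\<in>S. u x z \<le> u z z)"
proof -
  obtain r where "strict_mono r" and lim: "(\<lambda>j. X (r j)) \<longlonglongrightarrow> z"
    using \<open>limit_point X z\<close> by (auto simp: limit_point_def o_def)
  have X_in: "X m \<in> S" for m
    using init step by (cases m) auto
  have z_in: "z \<in> S"
    using closed_sequentially[OF \<open>closed S\<close>, of "\<lambda>j. X (r j)"] X_in lim by blast
  have ascent: "f (X m) \<le> f (X (Suc m))" for m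
  proof -
    have "f (X m) = u (X m) (X m)"
      using touching X_in by simp
    also have "\<dots> \<le> u (X (Suc m)) (X m)"
      using step X_in by blast
    also have "\<dots> \<le> f (X (Suc m))"
      using minorant X_in by blast
    finally show ?thesis .
  qed
  have f_bound: "f (X m) \<le> f z" for m
  proof (rule LIMSEQ_le_const[OF isCont_tendsto_compose[OF f_cont[OF z_in] lim]])
    show "\<exists>N. \<forall>j\<ge>N. f (X m) \<le> f (X (r j))"
    proof (intro exI allI impI)
      fix j assume "m \<le> j"
      then have "m \<le> r j"
        using seq_suble[OF \<open>strict_mono r\<close>, of j] by linarith
      then show "f (X m) \<le> f (X (r j))"
        using incseq_SucI[of "\<lambda>m. f (X m)", OF ascent] by (simp add: incseq_def)
    qed
  qed
  have "u x z \<le> u z z" if "x \<in> S" for x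
  proof -
    have "u x (X (r j)) \<le> f z" for j
      using step[of "r j"] minorant[of "X (Suc (r j))" "X (r j)"] f_bound[of "Suc (r j)"] X_in that
      by (meson order_trans)
    then have "u x z \<le> f z"
      using isCont_tendsto_compose[OF u_cont[OF that z_in] lim] by (simp add: LIMSEQ_le_const2)
    then show ?thesis
      using touching[OF z_in] by simp
  qed
  with z_in show ?thesis
    by blast
qed

lemma has_derivative_vec_nth [derivative_intros]: "((\<lambda>x. x $ i) has_derivative (\<lambda>h. h $ i)) F"
  using bounded_linear_vec_nth by (rule bounded_linear.has_derivative) (rule has_derivative_ident)

definition received_power :: "('k::finite \<Rightarrow> 'k \<Rightarrow> real) \<Rightarrow> ('k \<Rightarrow> real) \<Rightarrow> 'k \<Rightarrow> real^'k \<Rightarrow> real" where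
  "received_power a n k P = (\<Sum>k'\<in>UNIV. a k k' * P$k') + n k"

definition interference_power ::
    "('k::finite \<Rightarrow> 'k \<Rightarrow> real) \<Rightarrow> ('k \<Rightarrow> real) \<Rightarrow> ('k \<Rightarrow> real) \<Rightarrow> 'k \<Rightarrow> real^'k \<Rightarrow> real" where
  "interference_power a d n k P = received_power a n k P - d k * P$k"

lemma ffun_eq: "ffun a n P k = log 2 (received_power a n k P)"
  by (simp add: ffun_def received_power_def)

lemma gfun_eq: "gfun a d n P k = log 2 (interference_power a d n k P)"
  by (simp add: gfun_def interference_power_def received_power_def algebra_simps)

lemma fhat_eq: "fhat a n P P0 k = log_tangent 2 (received_power a n k P0) (received_power a n k P)"
  by (simp add: fhat_def ffun_eq log_tangent_def received_power_def right_diff_distrib sum_subtractf)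

lemma ghat_eq:
  "ghat a d n P P0 k = log_tangent 2 (interference_power a d n k P0) (interference_power a d n k P)"
  by (simp add: ghat_def gfun_eq log_tangent_def interference_power_def received_power_def
      right_diff_distrib sum_subtractf algebra_simps)

lemma Rbar_self [simp]: "Rbar c a d n P P k = Rate c a d n P k"
  by (simp add: Rbar_def Rate_def ghat_eq gfun_eq)

lemma Rhat_self [simp]: "Rhat c a d n P P k = Rate c a d n P k"
  by (simp add: Rhat_def Rate_def fhat_eq ffun_eq)

lemma EEbar_self [simp]: "EEbar c a d n C0 \<Delta> \<beta> P P = EE c a d n C0 \<Delta> \<beta> P"
  by (simp add: EEbar_def EE_def)

lemma has_derivative_received_power:
  "(received_power a n k has_derivative (\<lambda>h. \<Sum>k'\<in>UNIV. a k k' * h$k')) F"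
  unfolding received_power_def[abs_def] by (auto intro!: derivative_eq_intros)

lemma has_derivative_interference_power:
  "(interference_power a d n k has_derivative (\<lambda>h. (\<Sum>k'\<in>UNIV. a k k' * h$k') - d k * h$k)) F"
  unfolding interference_power_def[abs_def]
  by (auto intro!: derivative_eq_intros has_derivative_received_power)

lemma isCont_received_power [continuous_intros]: "isCont (received_power a n k) x"
  using has_derivative_continuous[OF has_derivative_received_power] .

lemma isCont_interference_power [continuous_intros]: "isCont (interference_power a d n k) x"
  using has_derivative_continuous[OF has_derivative_interference_power] .

lemma Feas_nonneg: "P \<in> Feas Pmax a d n \<gamma> \<Longrightarrow> 0 \<le> P"
  by (simp add: Feas_def less_eq_vec_def)

lemma closed_Feas: "closed (Feas Pmax a d n \<gamma>)"
  unfolding Feas_def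
  by (intro closed_Collect_all closed_Collect_conj closed_Collect_le continuous_intros)

lemma convex_Feas: "convex (Feas Pmax a d n \<gamma>)"
proof -
  define qos where "qos k P = \<gamma> k * (\<Sum>k'\<in>UNIV. a k k' * P$k') - (1 + \<gamma> k) * d k * P$k" for k P
  have "linear (qos k)" for k
    unfolding qos_def by (rule linearI) (simp_all add: algebra_simps sum.distrib sum_distrib_left)
  moreover have "Feas Pmax a d n \<gamma> = (\<Inter>k. (\<lambda>P. P$k) -` {0..Pmax} \<inter> qos k -` {..- \<gamma> k * n k})"
    by (auto simp: Feas_def qos_def algebra_simps)
  ultimately show ?thesis
    using bounded_linear.linear[OF bounded_linear_vec_nth]
    by (auto intro!: convex_INT convex_Int convex_linear_vimage)
qed

locale energy_efficiency_model =
  fixes c C0 :: real and a :: "'k::finite \<Rightarrow> 'k \<Rightarrow> real" and d n \<Delta> \<beta> :: "'k \<Rightarrow> real"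
  assumes c_nonneg: "0 \<le> c" and C0_pos: "0 < C0"
    and a_nonneg: "\<And>k k'. 0 \<le> a k k'" and d_nonneg: "\<And>k. 0 \<le> d k"
    and d_le_a: "\<And>k. d k \<le> a k k" and n_pos: "\<And>k. 0 < n k"
    and Delta_nonneg: "\<And>k. 0 \<le> \<Delta> k" and beta_nonneg: "\<And>k. 0 \<le> \<beta> k"
begin

lemma interference_power_pos:
  assumes "0 \<le> P"
  shows "0 < interference_power a d n k P"
proof -
  have "d k * P$k \<le> a k k * P$k"
    using assms d_le_a by (simp add: less_eq_vec_def mult_right_mono)
  also have "\<dots> \<le> (\<Sum>k'\<in>UNIV. a k k' * P$k')"
    using assms a_nonneg by (intro member_le_sum) (auto simp: less_eq_vec_def)
  finally show ?thesis
    using n_pos[of k] by (simp add: interference_power_def received_power_def)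
qed

lemma interference_le_received_power:
  assumes "0 \<le> P"
  shows "interference_power a d n k P \<le> received_power a n k P"
  using assms d_nonneg by (simp add: interference_power_def less_eq_vec_def)

lemma received_power_pos: "0 \<le> P \<Longrightarrow> 0 < received_power a n k P"
  using interference_power_pos interference_le_received_power by (rule less_le_trans)

lemma Rate_nonneg:
  assumes "0 \<le> P"
  shows "0 \<le> Rate c a d n P k"
proof -
  have "log 2 (interference_power a d n k P) \<le> log 2 (received_power a n k P)"
    using interference_power_pos[OF assms] received_power_pos[OF assms]
      interference_le_received_power[OF assms]
    by simp
  then show ?thesis
    using c_nonneg by (simp add: Rate_def ffun_eq gfun_eq)
qed

lemma Rbar_le_Rate: "0 \<le> P \<Longrightarrow> 0 \<le> P0 \<Longrightarrow> Rbar c a d n P P0 k \<le> Rate c a d n P k"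
  using c_nonneg log_le_log_tangent[of 2, OF _ interference_power_pos interference_power_pos]
  by (simp add: Rbar_def Rate_def ghat_eq gfun_eq mult_left_mono)

lemma Rate_le_Rhat: "0 \<le> P \<Longrightarrow> 0 \<le> P0 \<Longrightarrow> Rate c a d n P k \<le> Rhat c a d n P P0 k"
  using c_nonneg log_le_log_tangent[of 2, OF _ received_power_pos received_power_pos]
  by (simp add: Rhat_def Rate_def fhat_eq ffun_eq mult_left_mono)

lemma PN_pos: "0 \<le> P \<Longrightarrow> (\<And>k. 0 \<le> x k) \<Longrightarrow> 0 < PN C0 \<Delta> \<beta> P x"
  using C0_pos Delta_nonneg beta_nonneg
  by (auto simp: PN_def less_eq_vec_def intro!: add_pos_nonneg sum_nonneg)

lemma PN_mono: "(\<And>k. x k \<le> y k) \<Longrightarrow> PN C0 \<Delta> \<beta> P x \<le> PN C0 \<Delta> \<beta> P y"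
  using beta_nonneg by (auto simp: PN_def intro!: sum_mono mult_left_mono)

lemma EEbar_le_EE:
  assumes "0 \<le> P" "0 \<le> P0"
  shows "EEbar c a d n C0 \<Delta> \<beta> P P0 \<le> EE c a d n C0 \<Delta> \<beta> P"
  unfolding EEbar_def EE_def
proof (rule frac_le)
  show "0 \<le> (\<Sum>k\<in>UNIV. Rate c a d n P k)"
    using Rate_nonneg assms by (simp add: sum_nonneg)
  show "(\<Sum>k\<in>UNIV. Rbar c a d n P P0 k) \<le> (\<Sum>k\<in>UNIV. Rate c a d n P k)"
    using Rbar_le_Rate assms by (simp add: sum_mono)
  show "0 < PN C0 \<Delta> \<beta> P (\<lambda>k. Rate c a d n P k)"
    using PN_pos Rate_nonneg assms by simp
  show "PN C0 \<Delta> \<beta> P (\<lambda>k. Rate c a d n P k) \<le> PN C0 \<Delta> \<beta> P (\<lambda>k. Rhat c a d n P P0 k)"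
    using PN_mono Rate_le_Rhat assms by simp
qed

lemma has_derivative_PN_quotient:
  fixes r s :: "'k::finite \<Rightarrow> real^'k \<Rightarrow> real"
  assumes r: "\<And>k. (r k has_derivative r' k) (at x)" and s: "\<And>k. (s k has_derivative s' k) (at x)"
    and "PN C0 \<Delta> \<beta> x (\<lambda>k. s k x) \<noteq> 0"
  shows "((\<lambda>P. (\<Sum>k\<in>UNIV. r k P) / PN C0 \<Delta> \<beta> P (\<lambda>k. s k P)) has_derivative
    (\<lambda>h. ((\<Sum>k\<in>UNIV. r' k h) * PN C0 \<Delta> \<beta> x (\<lambda>k. s k x)
       - (\<Sum>k\<in>UNIV. r k x) * ((\<Sum>k\<in>UNIV. \<Delta> k * h$k) + (\<Sum>k\<in>UNIV. \<beta> k * s' k h)))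
     / (PN C0 \<Delta> \<beta> x (\<lambda>k. s k x) * PN C0 \<Delta> \<beta> x (\<lambda>k. s k x)))) (at x)"
proof -
  have "((\<lambda>P. \<Sum>k\<in>UNIV. r k P) has_derivative (\<lambda>h. \<Sum>k\<in>UNIV. r' k h)) (at x)"
    by (intro has_derivative_sum r)
  moreover have "((\<lambda>P. PN C0 \<Delta> \<beta> P (\<lambda>k. s k P)) has_derivative
      (\<lambda>h. (\<Sum>k\<in>UNIV. \<Delta> k * h$k) + (\<Sum>k\<in>UNIV. \<beta> k * s' k h))) (at x)"
    unfolding PN_def by (auto intro!: derivative_eq_intros s)
  ultimately show ?thesis
    using assms(3) by (rule has_derivative_divide')
qed

lemma rate_surrogates_common_derivative:
  assumes "0 \<le> x"
  shows "\<exists>R'. \<forall>k. ((\<lambda>P. Rate c a d n P k) has_derivative R' k) (at x)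
    \<and> ((\<lambda>P. Rbar c a d n P x k) has_derivative R' k) (at x)
    \<and> ((\<lambda>P. Rhat c a d n P x k) has_derivative R' k) (at x)"
  unfolding Rate_def Rbar_def Rhat_def ffun_eq gfun_eq fhat_eq ghat_eq
  by (intro exI[of _ "\<lambda>k h. c * ((\<Sum>k'\<in>UNIV. a k k' * h$k') / (ln 2 * received_power a n k x)
        - ((\<Sum>k'\<in>UNIV. a k k' * h$k') - d k * h$k) / (ln 2 * interference_power a d n k x))"]
      allI conjI has_derivative_mult_right has_derivative_diff has_derivative_log_comp
      has_derivative_log_tangent_comp has_derivative_received_power has_derivative_interference_power
      received_power_pos interference_power_pos assms)

lemma EE_EEbar_common_derivative:
  assumes "0 \<le> x"
  shows "\<exists>D. (EE c a d n C0 \<Delta> \<beta> has_derivative D) (at x)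
    \<and> ((\<lambda>P. EEbar c a d n C0 \<Delta> \<beta> P x) has_derivative D) (at x)"
proof -
  obtain R' where R':
    "\<And>k. ((\<lambda>P. Rate c a d n P k) has_derivative R' k) (at x)"
    "\<And>k. ((\<lambda>P. Rbar c a d n P x k) has_derivative R' k) (at x)"
    "\<And>k. ((\<lambda>P. Rhat c a d n P x k) has_derivative R' k) (at x)"
    using rate_surrogates_common_derivative[OF assms] by blast
  have "PN C0 \<Delta> \<beta> x (\<lambda>k. Rate c a d n x k) \<noteq> 0"
    using PN_pos Rate_nonneg assms by (simp add: less_imp_neq[symmetric])
  with has_derivative_PN_quotient[where r = "\<lambda>k P. Rate c a d n P k" and s = "\<lambda>k P. Rate c a d n P k",
      OF R'(1) R'(1)]
    has_derivative_PN_quotient[where r = "\<lambda>k P. Rbar c a d n P x k" and s = "\<lambda>k P. Rhat c a d n P x k",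
      OF R'(2) R'(3)]
  show ?thesis
    unfolding EE_def[abs_def] EEbar_def by auto
qed

lemma isCont_EE: "0 \<le> x \<Longrightarrow> isCont (EE c a d n C0 \<Delta> \<beta>) x"
  using EE_EEbar_common_derivative has_derivative_continuous by blast

lemma isCont_EEbar:
  assumes "0 \<le> P" "0 \<le> x"
  shows "isCont (EEbar c a d n C0 \<Delta> \<beta> P) x"
proof -
  have "0 < PN C0 \<Delta> \<beta> P (\<lambda>k. Rhat c a d n P x k)"
    using assms by (intro PN_pos order_trans[OF Rate_nonneg Rate_le_Rhat])
  moreover have "interference_power a d n k x \<noteq> 0" "received_power a n k x \<noteq> 0" for k
    using interference_power_pos[OF assms(2)] received_power_pos[OF assms(2)] by (simp_all add: less_imp_neq[symmetric])
  ultimately show ?thesis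
    unfolding EEbar_def[abs_def] Rbar_def Rhat_def fhat_eq ghat_eq log_tangent_def PN_def
    by (auto intro!: continuous_intros)
qed

end

theorem theorem1:
  fixes c Pmax C0 :: real
    and a :: "'k::finite \<Rightarrow> 'k \<Rightarrow> real"
    and d n \<gamma> \<Delta> \<beta> :: "'k \<Rightarrow> real"
    and Pseq :: "nat \<Rightarrow> real^'k"
  assumes c_pos: "c > 0" and Pmax_pos: "Pmax > 0"
    and a_nonneg: "\<And>k k'. a k k' \<ge> 0"
    and d_nonneg: "\<And>k. d k \<ge> 0"
    and n_pos: "\<And>k. n k > 0"
    and a_ge_d: "\<And>k. a k k \<ge> d k"
    and gamma_nonneg: "\<And>k. \<gamma> k \<ge> 0"
    and C0_pos: "C0 > 0"
    and Delta_ge1: "\<And>k. \<Delta> k \<ge> 1"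
    and beta_pos: "\<And>k. \<beta> k > 0"
    and F_nonempty: "Feas Pmax a d n \<gamma> \<noteq> {}"
    and init: "Pseq 0 \<in> Feas Pmax a d n \<gamma>"
    and step: "\<And>m. Pseq (Suc m) \<in> Feas Pmax a d n \<gamma> \<and>
                 (\<forall>P\<in>Feas Pmax a d n \<gamma>.
                    EEbar c a d n C0 \<Delta> \<beta> P (Pseq m) \<le> EEbar c a d n C0 \<Delta> \<beta> (Pseq (Suc m)) (Pseq m))"
  shows "\<forall>Ps. limit_point Pseq Ps \<longrightarrow>
           stationary_point (EE c a d n C0 \<Delta> \<beta>) (Feas Pmax a d n \<gamma>) Ps"
proof (intro allI impI)
  interpret energy_efficiency_model c C0 a d n \<Delta> \<beta>
    using c_pos C0_pos a_nonneg d_nonneg a_ge_d n_pos Delta_ge1 beta_pos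
    by unfold_locales (auto intro: order_trans[OF zero_le_one] less_imp_le)
  fix Ps
  assume "limit_point Pseq Ps"
  let ?F = "Feas Pmax a d n \<gamma>"
  have surrogate_max: "Ps \<in> ?F \<and> (\<forall>P\<in>?F. EEbar c a d n C0 \<Delta> \<beta> P Ps \<le> EEbar c a d n C0 \<Delta> \<beta> Ps Ps)"
    by (rule minorize_maximize_limit_point[OF closed_Feas _ _ _ _ init step \<open>limit_point Pseq Ps\<close>])
      (auto intro!: EEbar_le_EE isCont_EE isCont_EEbar Feas_nonneg)
  moreover obtain D where EE_deriv: "(EE c a d n C0 \<Delta> \<beta> has_derivative D) (at Ps)"
    and EEbar_deriv: "((\<lambda>P. EEbar c a d n C0 \<Delta> \<beta> P Ps) has_derivative D) (at Ps)"
    using EE_EEbar_common_derivative Feas_nonneg surrogate_max by blast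
  ultimately show "stationary_point (EE c a d n C0 \<Delta> \<beta>) ?F Ps"
    using stationary_point_if_surrogate_maximized[OF convex_Feas _ EE_deriv EEbar_deriv] by blast
qed

end
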